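(* Let $X$ be a Baire space and $\sigma : X\to X$ a homeomorphism, inducing the automorphism $\widetilde{\sigma}(f) = f\circ\sigma^{-1}$ of $C(X)$. Let $A$ be a subalgebra of $C(X)$ invariant under $\widetilde{\sigma}$ and $\widetilde{\sigma}^{-1}$, which separates the points of $X$ and is such that for every non-empty open set $U\subseteq X$ there is a non-zero $f\in A$ vanishing on $X\setminus U$. Then $A$ is a maximal abelian subalgebra of $A\rtimes_{\widetilde{\sigma}}\mathbb{Z}$ if and only if the set $\mathrm{Per}^\infty(X) = \{x\in X : \sigma^n(x)\neq x \text{ for all } n\in\mathbb{Z}\setminus\{0\}\}$ of non-periodic points is dense in $X$.
   Context: $C(X)$ is the algebra of continuous complex-valued functions on $X$. The crossed product $A \rtimes_{\widetilde{\sigma}} \mathbb{Z}$ is the set of finitely supported functions $\mathbb{Z}\to A$, written $\sum_n f_n\delta^n$, with pointwise linear operations and multiplication determined by $(f_n\delta^n)*(g_m\delta^m)=f_n\,\widetilde{\sigma}^n(g_m)\,\delta^{n+m}$; $A$ is embedded as $\{f_0\delta^0\}$. *)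

theory Defs
  imports "HOL-Analysis.Analysis"
begin

text \<open>The space X is the whole type 'a (a topological space).
  Baire space: every countable intersection of open dense subsets is dense.\<close>
definition baire_space :: "'a::topological_space itself \<Rightarrow> bool" where
  "baire_space _ \<longleftrightarrow>
     (\<forall>G :: nat \<Rightarrow> 'a set. (\<forall>n. open (G n) \<and> closure (G n) = UNIV)
        \<longrightarrow> closure (\<Inter>n. G n) = UNIV)"

definition ipow :: "('a \<Rightarrow> 'a) \<Rightarrow> ('a \<Rightarrow> 'a) \<Rightarrow> int \<Rightarrow> 'a \<Rightarrow> 'a" where
  "ipow \<sigma> \<tau> n = (if n \<ge> 0 then \<sigma> ^^ nat n else \<tau> ^^ nat (- n))"

definition sigtil_pow :: "('a \<Rightarrow> 'a) \<Rightarrow> ('a \<Rightarrow> 'a) \<Rightarrow> int \<Rightarrow> ('a \<Rightarrow> complex) \<Rightarrow> ('a \<Rightarrow> complex)" where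
  "sigtil_pow \<sigma> \<tau> n f = f \<circ> ipow \<sigma> \<tau> (- n)"

definition CX :: "('a::topological_space \<Rightarrow> complex) set" where
  "CX = {f. continuous_on UNIV f}"

definition is_subalgebra_CX :: "('a::topological_space \<Rightarrow> complex) set \<Rightarrow> bool" where
  "is_subalgebra_CX A \<longleftrightarrow> A \<subseteq> CX \<and> (\<lambda>x. 0) \<in> A
     \<and> (\<forall>f\<in>A. \<forall>g\<in>A. (\<lambda>x. f x + g x) \<in> A)
     \<and> (\<forall>c::complex. \<forall>f\<in>A. (\<lambda>x. c * f x) \<in> A)
     \<and> (\<forall>f\<in>A. \<forall>g\<in>A. (\<lambda>x. f x * g x) \<in> A)"

definition crossed_product :: "('a \<Rightarrow> complex) set \<Rightarrow> (int \<Rightarrow> 'a \<Rightarrow> complex) set" where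
  "crossed_product A = {F. finite {n. F n \<noteq> (\<lambda>x. 0)} \<and> (\<forall>n. F n \<in> A)}"

text \<open>Multiplication: (f_n delta^n)*(g_m delta^m) = f_n sigma~^n(g_m) delta^(n+m), extended bilinearly.\<close>
definition cp_mult :: "('a \<Rightarrow> 'a) \<Rightarrow> ('a \<Rightarrow> 'a) \<Rightarrow> (int \<Rightarrow> 'a \<Rightarrow> complex) \<Rightarrow> (int \<Rightarrow> 'a \<Rightarrow> complex)
    \<Rightarrow> (int \<Rightarrow> 'a \<Rightarrow> complex)" where
  "cp_mult \<sigma> \<tau> F G = (\<lambda>k x. \<Sum>n\<in>{n. F n \<noteq> (\<lambda>x. 0)}. F n x * sigtil_pow \<sigma> \<tau> n (G (k - n)) x)"

definition cp_embed :: "('a \<Rightarrow> complex) \<Rightarrow> (int \<Rightarrow> 'a \<Rightarrow> complex)" where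
  "cp_embed f = (\<lambda>n. if n = 0 then f else (\<lambda>x. 0))"

definition cp_subalgebra :: "('a \<Rightarrow> 'a) \<Rightarrow> ('a \<Rightarrow> 'a) \<Rightarrow> ('a \<Rightarrow> complex) set
    \<Rightarrow> (int \<Rightarrow> 'a \<Rightarrow> complex) set \<Rightarrow> bool" where
  "cp_subalgebra \<sigma> \<tau> A B \<longleftrightarrow> B \<subseteq> crossed_product A \<and> (\<lambda>n x. 0) \<in> B
     \<and> (\<forall>F\<in>B. \<forall>G\<in>B. (\<lambda>n x. F n x + G n x) \<in> B)
     \<and> (\<forall>c::complex. \<forall>F\<in>B. (\<lambda>n x. c * F n x) \<in> B)
     \<and> (\<forall>F\<in>B. \<forall>G\<in>B. cp_mult \<sigma> \<tau> F G \<in> B)"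

definition cp_commutative :: "('a \<Rightarrow> 'a) \<Rightarrow> ('a \<Rightarrow> 'a) \<Rightarrow> (int \<Rightarrow> 'a \<Rightarrow> complex) set \<Rightarrow> bool" where
  "cp_commutative \<sigma> \<tau> B \<longleftrightarrow> (\<forall>F\<in>B. \<forall>G\<in>B. cp_mult \<sigma> \<tau> F G = cp_mult \<sigma> \<tau> G F)"

definition maximal_abelian :: "('a \<Rightarrow> 'a) \<Rightarrow> ('a \<Rightarrow> 'a) \<Rightarrow> ('a \<Rightarrow> complex) set
    \<Rightarrow> (int \<Rightarrow> 'a \<Rightarrow> complex) set \<Rightarrow> bool" where
  "maximal_abelian \<sigma> \<tau> A B \<longleftrightarrow> cp_subalgebra \<sigma> \<tau> A B \<and> cp_commutative \<sigma> \<tau> B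
     \<and> (\<forall>C. cp_subalgebra \<sigma> \<tau> A C \<and> cp_commutative \<sigma> \<tau> C \<and> B \<subseteq> C \<longrightarrow> C = B)"

definition Per_inf :: "('a \<Rightarrow> 'a) \<Rightarrow> ('a \<Rightarrow> 'a) \<Rightarrow> 'a set" where
  "Per_inf \<sigma> \<tau> = {x. \<forall>n::int. n \<noteq> 0 \<longrightarrow> ipow \<sigma> \<tau> n x \<noteq> x}"

end

theory Submission
  imports Defs
begin

text \<open>If the non-periodic points are dense, let \<open>G = \<Sum> G\<^sub>n \<delta>\<^sup>n\<close> commute with
  every \<open>a \<in> A\<close>. Comparing coefficients gives \<open>G\<^sub>n(x) (a(\<sigma>\<^sup>-\<^sup>n x) - a(x)) = 0\<close>;
  at a non-periodic \<open>x\<close> some \<open>a\<close> separates \<open>\<sigma>\<^sup>-\<^sup>n x\<close> from \<open>x\<close>, so for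
  \<open>n \<noteq> 0\<close> the continuous \<open>G\<^sub>n\<close> vanishes on a dense set, and \<open>G \<in> A\<close>.

  Conversely, the sets of \<open>\<sigma>\<^sup>p\<close>-fixed points are closed because \<open>A\<close> separates points,
  and they cover the open complement of the closure of the non-periodic points; by the
  Baire property some \<open>\<sigma>\<^sup>p\<close> with \<open>p \<noteq> 0\<close> is the identity on a non-empty open
  \<open>V\<close>. For \<open>f \<in> A\<close> supported in \<open>V\<close>, \<open>f \<delta>\<^sup>-\<^sup>p\<close> lies in a commutative
  subalgebra properly containing \<open>A\<close>: that of the elements whose \<open>n\<close>-th coefficient
  is supported in the fixed points of \<open>\<sigma>\<^sup>n\<close>.\<close>

lemma ipow_0 [simp]: "ipow \<sigma> \<tau> 0 = id"
  by (simp add: ipow_def)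

lemma ipow_plus_1:
  assumes "\<And>x. \<sigma> (\<tau> x) = x"
  shows "ipow \<sigma> \<tau> (n + 1) = \<sigma> \<circ> ipow \<sigma> \<tau> n"
proof (cases "n \<ge> 0")
  case True
  then have "nat (n + 1) = Suc (nat n)" by simp
  with True show ?thesis by (simp add: ipow_def)
next
  case False
  then have "nat (- n) = Suc (nat (- (n + 1)))" by simp
  with False show ?thesis by (auto simp: ipow_def fun_eq_iff assms)
qed

lemma ipow_minus_1:
  assumes "\<And>x. \<tau> (\<sigma> x) = x"
  shows "ipow \<sigma> \<tau> (n - 1) = \<tau> \<circ> ipow \<sigma> \<tau> n"
proof (cases "n \<le> 0")
  case True
  then have "nat (- (n - 1)) = Suc (nat (- n))" by simp
  with True show ?thesis by (auto simp: ipow_def)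
next
  case False
  then have "nat n = Suc (nat (n - 1))" by simp
  with False show ?thesis by (auto simp: ipow_def fun_eq_iff assms)
qed

lemma ipow_add:
  assumes st: "\<And>x. \<sigma> (\<tau> x) = x" and ts: "\<And>x. \<tau> (\<sigma> x) = x"
  shows "ipow \<sigma> \<tau> (m + n) = ipow \<sigma> \<tau> m \<circ> ipow \<sigma> \<tau> n"
proof (induction m rule: int_induct[where k = 0])
  case base
  show ?case by simp
next
  case (step1 i)
  have "ipow \<sigma> \<tau> (i + 1 + n) = \<sigma> \<circ> ipow \<sigma> \<tau> (i + n)"
    using ipow_plus_1[of \<sigma> \<tau> "i + n", OF st] by (simp add: ac_simps)
  with step1 show ?case by (simp add: ipow_plus_1[of \<sigma> \<tau>, OF st] comp_assoc)
next
  case (step2 i)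
  have "ipow \<sigma> \<tau> (i - 1 + n) = \<tau> \<circ> ipow \<sigma> \<tau> (i + n)"
    using ipow_minus_1[of \<tau> \<sigma> "i + n", OF ts] by (simp add: algebra_simps)
  with step2 show ?case by (simp add: ipow_minus_1[of \<tau> \<sigma>, OF ts] comp_assoc)
qed

lemma ipow_uminus_fixed:
  assumes "\<And>x. \<sigma> (\<tau> x) = x" "\<And>x. \<tau> (\<sigma> x) = x" and "ipow \<sigma> \<tau> n x = x"
  shows "ipow \<sigma> \<tau> (- n) x = x"
  using ipow_add[OF assms(1,2), of "- n" n] assms(3) by (metis add.left_inverse comp_apply id_apply ipow_0)

lemma continuous_on_funpow:
  fixes f :: "'a::topological_space \<Rightarrow> 'a"
  assumes "continuous_on UNIV f"
  shows "continuous_on UNIV (f ^^ n)"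
proof (induction n)
  case (Suc n)
  then show ?case
    using continuous_on_compose[of UNIV "f ^^ n" f] continuous_on_subset[OF assms] by simp
qed simp

lemma continuous_on_ipow:
  assumes "continuous_on UNIV \<sigma>" "continuous_on UNIV \<tau>"
  shows "continuous_on UNIV (ipow \<sigma> \<tau> n)"
  using continuous_on_funpow[OF assms(1)] continuous_on_funpow[OF assms(2)]
  by (simp add: ipow_def)

lemma sigtil_pow_0 [simp]: "sigtil_pow \<sigma> \<tau> 0 f = f"
  by (simp add: sigtil_pow_def)

lemma sigtil_pow_zero [simp]: "sigtil_pow \<sigma> \<tau> n (\<lambda>x. 0) = (\<lambda>x. 0)"
  by (simp add: sigtil_pow_def comp_def)

lemma sigtil_pow_add:
  assumes "\<And>x. \<sigma> (\<tau> x) = x" "\<And>x. \<tau> (\<sigma> x) = x"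
  shows "sigtil_pow \<sigma> \<tau> (m + n) f = sigtil_pow \<sigma> \<tau> m (sigtil_pow \<sigma> \<tau> n f)"
  using ipow_add[OF assms, of "- n" "- m"] by (simp add: sigtil_pow_def comp_assoc add.commute)

lemma sigtil_pow_mem:
  assumes st: "\<And>x. \<sigma> (\<tau> x) = x" and ts: "\<And>x. \<tau> (\<sigma> x) = x"
    and "\<forall>f\<in>A. sigtil_pow \<sigma> \<tau> 1 f \<in> A" "\<forall>f\<in>A. sigtil_pow \<sigma> \<tau> (- 1) f \<in> A"
    and "f \<in> A"
  shows "sigtil_pow \<sigma> \<tau> n f \<in> A"
proof (induction n rule: int_induct[where k = 0])
  case base
  show ?case using \<open>f \<in> A\<close> by simp
next
  case (step1 i)
  then show ?case using assms(3) sigtil_pow_add[OF st ts, of 1 i] by (simp add: add.commute)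
next
  case (step2 i)
  then show ?case using assms(4) sigtil_pow_add[OF st ts, of "- 1" i] by simp
qed

lemma subalgebra_CX_sum:
  assumes "is_subalgebra_CX A" and "\<forall>i\<in>S. \<phi> i \<in> A"
  shows "(\<lambda>x. \<Sum>i\<in>S. \<phi> i x) \<in> A"
  using assms(2)
proof (induction S rule: infinite_finite_induct)
  case (insert i S)
  then show ?case
    using assms(1) unfolding is_subalgebra_CX_def by simp
qed (use assms(1) in \<open>simp_all add: is_subalgebra_CX_def\<close>)

lemma finite_support_cp_mult:
  assumes "finite {n. F n \<noteq> (\<lambda>x. 0)}" "finite {n. G n \<noteq> (\<lambda>x. 0)}"
  shows "finite {k. cp_mult \<sigma> \<tau> F G k \<noteq> (\<lambda>x. 0)}"
proof -
  let ?SF = "{n. F n \<noteq> (\<lambda>x. 0)}" and ?SG = "{n. G n \<noteq> (\<lambda>x. 0)}"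
  have "{k. cp_mult \<sigma> \<tau> F G k \<noteq> (\<lambda>x. 0)} \<subseteq> (\<lambda>(m, j). m + j) ` (?SF \<times> ?SG)"
  proof
    fix k assume "k \<in> {k. cp_mult \<sigma> \<tau> F G k \<noteq> (\<lambda>x. 0)}"
    then obtain x where "(\<Sum>n\<in>?SF. F n x * sigtil_pow \<sigma> \<tau> n (G (k - n)) x) \<noteq> 0"
      by (auto simp: cp_mult_def fun_eq_iff)
    then obtain m where "m \<in> ?SF" "F m x * sigtil_pow \<sigma> \<tau> m (G (k - m)) x \<noteq> 0"
      using sum.not_neutral_contains_not_neutral by blast
    then have "m \<in> ?SF" "k - m \<in> ?SG" by auto
    then show "k \<in> (\<lambda>(m, j). m + j) ` (?SF \<times> ?SG)"
      by (intro rev_image_eqI[of "(m, k - m)"]) auto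
  qed
  then show ?thesis
    using assms by (meson finite_SigmaI finite_imageI finite_subset)
qed

lemma cp_mult_mem_crossed_product:
  assumes sub: "is_subalgebra_CX A"
    and "\<And>x. \<sigma> (\<tau> x) = x" "\<And>x. \<tau> (\<sigma> x) = x"
    and "\<forall>f\<in>A. sigtil_pow \<sigma> \<tau> 1 f \<in> A" "\<forall>f\<in>A. sigtil_pow \<sigma> \<tau> (- 1) f \<in> A"
    and F: "F \<in> crossed_product A" and G: "G \<in> crossed_product A"
  shows "cp_mult \<sigma> \<tau> F G \<in> crossed_product A"
proof -
  have FA: "F n \<in> A" and GA: "G n \<in> A" for n
    using F G unfolding crossed_product_def by blast+
  have "sigtil_pow \<sigma> \<tau> n (G m) \<in> A" for n m
    by (rule sigtil_pow_mem[OF assms(2-5) GA])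
  moreover have "\<forall>f\<in>A. \<forall>g\<in>A. (\<lambda>x. f x * g x) \<in> A"
    using sub by (simp add: is_subalgebra_CX_def)
  ultimately have "cp_mult \<sigma> \<tau> F G k \<in> A" for k
    unfolding cp_mult_def using FA by (intro subalgebra_CX_sum[OF sub]) blast
  then show ?thesis
    using F G finite_support_cp_mult[of F G \<sigma> \<tau>] unfolding crossed_product_def by blast
qed

lemma cp_mult_cp_embed_right:
  assumes "finite {n. F n \<noteq> (\<lambda>x. 0)}"
  shows "cp_mult \<sigma> \<tau> F (cp_embed a) k x = F k x * a (ipow \<sigma> \<tau> (- k) x)"
proof -
  have "cp_mult \<sigma> \<tau> F (cp_embed a) k x
      = (\<Sum>n\<in>{n. F n \<noteq> (\<lambda>x. 0)}. if n = k then F k x * a (ipow \<sigma> \<tau> (- k) x) else 0)"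
    unfolding cp_mult_def by (rule sum.cong) (auto simp: cp_embed_def sigtil_pow_def)
  also have "\<dots> = F k x * a (ipow \<sigma> \<tau> (- k) x)"
    using assms by simp
  finally show ?thesis .
qed

lemma cp_mult_cp_embed_left: "cp_mult \<sigma> \<tau> (cp_embed a) G k x = a x * G k x"
proof (cases "a = (\<lambda>x. 0)")
  case True
  then have "{n. cp_embed a n \<noteq> (\<lambda>x. 0)} = {}" by (auto simp: cp_embed_def)
  with True show ?thesis by (simp add: cp_mult_def)
next
  case False
  then have "{n. cp_embed a n \<noteq> (\<lambda>x. 0)} = {0}" by (auto simp: cp_embed_def)
  then show ?thesis by (simp add: cp_mult_def cp_embed_def)
qed

lemma cp_mult_cp_embed_cp_embed:
  "cp_mult \<sigma> \<tau> (cp_embed f) (cp_embed g) = cp_embed (\<lambda>x. f x * g x)"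
  by (intro ext) (simp only: cp_mult_cp_embed_left, simp add: cp_embed_def)

lemma cp_embed_mem_crossed_product:
  assumes "(\<lambda>x. 0) \<in> A" "a \<in> A"
  shows "cp_embed a \<in> crossed_product A"
proof -
  have "{n. cp_embed a n \<noteq> (\<lambda>x. 0)} \<subseteq> {0}" by (auto simp: cp_embed_def)
  then show ?thesis
    using assms finite_subset by (auto simp: crossed_product_def cp_embed_def)
qed

lemma cp_subalgebra_cp_embed_image:
  assumes "is_subalgebra_CX A"
  shows "cp_subalgebra \<sigma> \<tau> A (cp_embed ` A)"
  unfolding cp_subalgebra_def
proof (intro conjI ballI allI)
  show "cp_embed ` A \<subseteq> crossed_product A"
    using assms cp_embed_mem_crossed_product by (auto simp: is_subalgebra_CX_def)
  have "(\<lambda>n x. 0) = cp_embed (\<lambda>x. 0 :: complex)"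
    by (auto simp: cp_embed_def)
  then show "(\<lambda>n x. 0) \<in> cp_embed ` A"
    using assms by (auto simp: is_subalgebra_CX_def)
next
  fix F G assume "F \<in> cp_embed ` A" "G \<in> cp_embed ` A"
  then obtain f g where "f \<in> A" "g \<in> A" and "F = cp_embed f" "G = cp_embed g"
    by blast
  moreover have "(\<lambda>n x. cp_embed f n x + cp_embed g n x) = cp_embed (\<lambda>x. f x + g x)"
    by (auto simp: cp_embed_def)
  ultimately show "(\<lambda>n x. F n x + G n x) \<in> cp_embed ` A" "cp_mult \<sigma> \<tau> F G \<in> cp_embed ` A"
    using assms by (auto simp: is_subalgebra_CX_def cp_mult_cp_embed_cp_embed)
next
  fix c :: complex and F assume "F \<in> cp_embed ` A"
  then obtain f where "f \<in> A" "F = cp_embed f"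
    by blast
  moreover have "(\<lambda>n x. c * cp_embed f n x) = cp_embed (\<lambda>x. c * f x)"
    by (auto simp: cp_embed_def)
  ultimately show "(\<lambda>n x. c * F n x) \<in> cp_embed ` A"
    using assms by (auto simp: is_subalgebra_CX_def)
qed

lemma cp_commutative_cp_embed_image: "cp_commutative \<sigma> \<tau> (cp_embed ` A)"
  by (auto simp: cp_commutative_def cp_mult_cp_embed_cp_embed mult.commute)

lemma eq_cp_embed_if_commutes_with_cp_embed:
  assumes G: "G \<in> crossed_product A" and "A \<subseteq> CX"
    and sep: "\<forall>x y. x \<noteq> y \<longrightarrow> (\<exists>f\<in>A. f x \<noteq> f y)"
    and dense: "closure (Per_inf \<sigma> \<tau>) = UNIV"
    and comm: "\<And>a. a \<in> A \<Longrightarrow> cp_mult \<sigma> \<tau> G (cp_embed a) = cp_mult \<sigma> \<tau> (cp_embed a) G"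
  shows "G = cp_embed (G 0)"
proof -
  have fin: "finite {n. G n \<noteq> (\<lambda>x. 0)}" and GA: "G n \<in> A" for n
    using G by (auto simp: crossed_product_def)
  have "G k x = 0" if "k \<noteq> 0" "x \<in> Per_inf \<sigma> \<tau>" for k x
  proof -
    have "ipow \<sigma> \<tau> (- k) x \<noteq> x"
      using that by (simp add: Per_inf_def)
    then obtain a where a: "a \<in> A" "a (ipow \<sigma> \<tau> (- k) x) \<noteq> a x"
      using sep by blast
    have "G k x * a (ipow \<sigma> \<tau> (- k) x) = a x * G k x"
      using fun_cong[OF fun_cong[OF comm[OF a(1)], of k], of x]
      by (simp add: cp_mult_cp_embed_right[OF fin] cp_mult_cp_embed_left)
    then have "G k x * (a (ipow \<sigma> \<tau> (- k) x) - a x) = 0"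
      by (simp add: algebra_simps)
    with a(2) show ?thesis by simp
  qed
  moreover have "continuous_on (closure (Per_inf \<sigma> \<tau>)) (G k)" for k
    using GA \<open>A \<subseteq> CX\<close> dense by (auto simp: CX_def)
  ultimately have "G k y = 0" if "k \<noteq> 0" for k y
    using continuous_constant_on_closure[of "Per_inf \<sigma> \<tau>" "G k" 0 y] dense that by auto
  then show ?thesis
    by (auto simp: cp_embed_def fun_eq_iff)
qed

lemma maximal_abelian_if_dense_Per_inf:
  assumes sub: "is_subalgebra_CX A"
    and sep: "\<forall>x y. x \<noteq> y \<longrightarrow> (\<exists>f\<in>A. f x \<noteq> f y)"
    and dense: "closure (Per_inf \<sigma> \<tau>) = UNIV"
  shows "maximal_abelian \<sigma> \<tau> A (cp_embed ` A)"
  unfolding maximal_abelian_def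
proof (intro conjI allI impI cp_subalgebra_cp_embed_image[OF sub] cp_commutative_cp_embed_image)
  fix C assume "cp_subalgebra \<sigma> \<tau> A C \<and> cp_commutative \<sigma> \<tau> C \<and> cp_embed ` A \<subseteq> C"
  then have C: "C \<subseteq> crossed_product A" and comm: "cp_commutative \<sigma> \<tau> C"
    and emb: "cp_embed ` A \<subseteq> C"
    by (auto simp: cp_subalgebra_def)
  have "G \<in> cp_embed ` A" if "G \<in> C" for G
  proof -
    have G: "G \<in> crossed_product A" using C that by blast
    have "G = cp_embed (G 0)"
    proof (rule eq_cp_embed_if_commutes_with_cp_embed[OF G _ sep dense])
      show "A \<subseteq> CX" using sub by (simp add: is_subalgebra_CX_def)
      fix a assume "a \<in> A"
      then show "cp_mult \<sigma> \<tau> G (cp_embed a) = cp_mult \<sigma> \<tau> (cp_embed a) G"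
        using comm emb \<open>G \<in> C\<close> by (auto simp: cp_commutative_def)
    qed
    moreover have "G 0 \<in> A" using G by (simp add: crossed_product_def)
    ultimately show ?thesis by blast
  qed
  with emb show "C = cp_embed ` A" by blast
qed

lemma cp_mult_eq_convolution:
  assumes "\<And>m x. F m x \<noteq> 0 \<Longrightarrow> ipow \<sigma> \<tau> (- m) x = x"
  shows "cp_mult \<sigma> \<tau> F G k x = (\<Sum>m\<in>{m. F m \<noteq> (\<lambda>x. 0)}. F m x * G (k - m) x)"
  unfolding cp_mult_def
proof (rule sum.cong)
  fix m
  show "F m x * sigtil_pow \<sigma> \<tau> m (G (k - m)) x = F m x * G (k - m) x"
    using assms[of m x] by (cases "F m x = 0") (simp_all add: sigtil_pow_def)
qed simp

lemma convolution_commute: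
  fixes F G :: "int \<Rightarrow> 'a \<Rightarrow> 'b::comm_semiring_0"
  assumes "finite {m. F m \<noteq> (\<lambda>x. 0)}" "finite {m. G m \<noteq> (\<lambda>x. 0)}"
  shows "(\<Sum>m\<in>{m. F m \<noteq> (\<lambda>x. 0)}. F m x * G (k - m) x)
       = (\<Sum>m\<in>{m. G m \<noteq> (\<lambda>x. 0)}. G m x * F (k - m) x)"
proof -
  let ?SF = "{m. F m \<noteq> (\<lambda>x. 0)}" and ?SG = "{m. G m \<noteq> (\<lambda>x. 0)}"
  let ?R = "(\<lambda>j. k - j) ` ?SG"
  have fin: "finite (?SF \<union> ?R)"
    using assms by simp
  have "(\<Sum>m\<in>?SF. F m x * G (k - m) x) = (\<Sum>m\<in>?SF \<union> ?R. F m x * G (k - m) x)"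
    by (rule sum.mono_neutral_left[OF fin]) auto
  also have "\<dots> = (\<Sum>m\<in>?R. F m x * G (k - m) x)"
  proof (rule sum.mono_neutral_right[OF fin])
    show "\<forall>i\<in>(?SF \<union> ?R) - ?R. F i x * G (k - i) x = 0"
    proof
      fix i assume "i \<in> (?SF \<union> ?R) - ?R"
      then have "k - i \<notin> ?SG"
        using image_eqI[of i "\<lambda>j. k - j" "k - i"] by auto
      then show "F i x * G (k - i) x = 0" by simp
    qed
  qed blast
  also have "\<dots> = (\<Sum>m\<in>?SG. G m x * F (k - m) x)"
    by (simp add: sum.reindex inj_on_def mult.commute)
  finally show ?thesis .
qed

text \<open>On these elements the twist in \<^const>\<open>cp_mult\<close> is invisible, so the product is
  the convolution of coefficients and hence commutative.\<close>
definition cp_fixed_support :: "('a \<Rightarrow> 'a) \<Rightarrow> ('a \<Rightarrow> 'a) \<Rightarrow> ('a \<Rightarrow> complex) set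
    \<Rightarrow> (int \<Rightarrow> 'a \<Rightarrow> complex) set" where
  "cp_fixed_support \<sigma> \<tau> A =
     {G \<in> crossed_product A. \<forall>n x. G n x \<noteq> 0 \<longrightarrow> ipow \<sigma> \<tau> (- n) x = x}"

lemma crossed_product_add:
  assumes "is_subalgebra_CX A" "F \<in> crossed_product A" "G \<in> crossed_product A"
  shows "(\<lambda>n x. F n x + G n x) \<in> crossed_product A"
proof -
  have "{n. (\<lambda>x. F n x + G n x) \<noteq> (\<lambda>x. 0)} \<subseteq> {n. F n \<noteq> (\<lambda>x. 0)} \<union> {n. G n \<noteq> (\<lambda>x. 0)}"
    by auto
  moreover have "finite ({n. F n \<noteq> (\<lambda>x. 0)} \<union> {n. G n \<noteq> (\<lambda>x. 0)})"
    using assms(2,3) by (simp add: crossed_product_def)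
  moreover have "(\<lambda>x. F n x + G n x) \<in> A" for n
    using assms by (simp add: crossed_product_def is_subalgebra_CX_def)
  ultimately show ?thesis
    unfolding crossed_product_def by (blast intro: finite_subset)
qed

lemma crossed_product_scale:
  assumes "is_subalgebra_CX A" "F \<in> crossed_product A"
  shows "(\<lambda>n x. c * F n x) \<in> crossed_product A"
proof -
  have "{n. (\<lambda>x. c * F n x) \<noteq> (\<lambda>x. 0)} \<subseteq> {n. F n \<noteq> (\<lambda>x. 0)}"
    by auto
  moreover have "(\<lambda>x. c * F n x) \<in> A" for n
    using assms by (simp add: crossed_product_def is_subalgebra_CX_def)
  ultimately show ?thesis
    using assms(2) unfolding crossed_product_def by (blast intro: finite_subset)
qed

lemma cp_subalgebra_cp_fixed_support:
  assumes sub: "is_subalgebra_CX A"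
    and st: "\<And>x. \<sigma> (\<tau> x) = x" and ts: "\<And>x. \<tau> (\<sigma> x) = x"
    and "\<forall>f\<in>A. sigtil_pow \<sigma> \<tau> 1 f \<in> A" "\<forall>f\<in>A. sigtil_pow \<sigma> \<tau> (- 1) f \<in> A"
  shows "cp_subalgebra \<sigma> \<tau> A (cp_fixed_support \<sigma> \<tau> A)"
  unfolding cp_subalgebra_def
proof (intro conjI ballI allI)
  show "cp_fixed_support \<sigma> \<tau> A \<subseteq> crossed_product A"
    by (auto simp: cp_fixed_support_def)
  show "(\<lambda>n x. 0) \<in> cp_fixed_support \<sigma> \<tau> A"
    using sub by (simp add: cp_fixed_support_def crossed_product_def is_subalgebra_CX_def)
next
  fix F G assume "F \<in> cp_fixed_support \<sigma> \<tau> A" "G \<in> cp_fixed_support \<sigma> \<tau> A"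
  then have F: "F \<in> crossed_product A" and G: "G \<in> crossed_product A"
    and fixF: "\<And>m x. F m x \<noteq> 0 \<Longrightarrow> ipow \<sigma> \<tau> (- m) x = x"
    and fixG: "\<And>m x. G m x \<noteq> 0 \<Longrightarrow> ipow \<sigma> \<tau> (- m) x = x"
    by (auto simp: cp_fixed_support_def)
  have "ipow \<sigma> \<tau> (- m) x = x" if "F m x + G m x \<noteq> 0" for m x
  proof (cases "F m x = 0")
    case True
    with that show ?thesis by (intro fixG) simp
  qed (rule fixF)
  with crossed_product_add[OF sub F G]
  show "(\<lambda>n x. F n x + G n x) \<in> cp_fixed_support \<sigma> \<tau> A"
    by (simp add: cp_fixed_support_def)
  have "ipow \<sigma> \<tau> (- k) x = x" if "cp_mult \<sigma> \<tau> F G k x \<noteq> 0" for k x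
  proof -
    have "(\<Sum>m\<in>{m. F m \<noteq> (\<lambda>x. 0)}. F m x * G (k - m) x) \<noteq> 0"
      using that by (simp add: cp_mult_eq_convolution[OF fixF])
    then obtain m where "F m x * G (k - m) x \<noteq> 0"
      using sum.not_neutral_contains_not_neutral by blast
    then have "F m x \<noteq> 0" "G (k - m) x \<noteq> 0"
      by simp_all
    then have "ipow \<sigma> \<tau> (- m) x = x" "ipow \<sigma> \<tau> (- (k - m)) x = x"
      using fixF fixG by blast+
    moreover have "- k = - m + - (k - m)"
      by simp
    ultimately show ?thesis
      using ipow_add[OF st ts] by (metis comp_apply)
  qed
  with cp_mult_mem_crossed_product[OF assms F G]
  show "cp_mult \<sigma> \<tau> F G \<in> cp_fixed_support \<sigma> \<tau> A"
    by (simp add: cp_fixed_support_def)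
next
  fix c :: complex and F assume "F \<in> cp_fixed_support \<sigma> \<tau> A"
  with crossed_product_scale[OF sub, of F c]
  show "(\<lambda>n x. c * F n x) \<in> cp_fixed_support \<sigma> \<tau> A"
    by (simp add: cp_fixed_support_def)
qed

lemma cp_commutative_cp_fixed_support: "cp_commutative \<sigma> \<tau> (cp_fixed_support \<sigma> \<tau> A)"
  unfolding cp_commutative_def
proof (intro ballI ext)
  fix F G k x assume "F \<in> cp_fixed_support \<sigma> \<tau> A" "G \<in> cp_fixed_support \<sigma> \<tau> A"
  then have "finite {n. F n \<noteq> (\<lambda>x. 0)}" "finite {n. G n \<noteq> (\<lambda>x. 0)}"
    and "\<And>m x. F m x \<noteq> 0 \<Longrightarrow> ipow \<sigma> \<tau> (- m) x = x"
    and "\<And>m x. G m x \<noteq> 0 \<Longrightarrow> ipow \<sigma> \<tau> (- m) x = x"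
    by (auto simp: cp_fixed_support_def crossed_product_def)
  then show "cp_mult \<sigma> \<tau> F G k x = cp_mult \<sigma> \<tau> G F k x"
    by (simp add: cp_mult_eq_convolution convolution_commute)
qed

lemma cp_embed_image_subset_cp_fixed_support:
  assumes "(\<lambda>x. 0) \<in> A"
  shows "cp_embed ` A \<subseteq> cp_fixed_support \<sigma> \<tau> A"
  using assms cp_embed_mem_crossed_product
  by (auto simp: cp_fixed_support_def cp_embed_def split: if_splits)


lemma not_maximal_abelian_if_periodic_on_support:
  assumes sub: "is_subalgebra_CX A"
    and inv: "\<And>x. \<sigma> (\<tau> x) = x" "\<And>x. \<tau> (\<sigma> x) = x"
      "\<forall>f\<in>A. sigtil_pow \<sigma> \<tau> 1 f \<in> A" "\<forall>f\<in>A. sigtil_pow \<sigma> \<tau> (- 1) f \<in> A"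
    and f: "f \<in> A" "f \<noteq> (\<lambda>x. 0)"
    and periodic: "p \<noteq> 0" "\<And>x. f x \<noteq> 0 \<Longrightarrow> ipow \<sigma> \<tau> p x = x"
  shows "\<not> maximal_abelian \<sigma> \<tau> A (cp_embed ` A)"
proof
  have zero: "(\<lambda>x. 0) \<in> A"
    using sub by (simp add: is_subalgebra_CX_def)
  define F where "F = (\<lambda>_ x. 0)(- p := f)"
  have "{n. F n \<noteq> (\<lambda>x. 0)} \<subseteq> {- p}"
    by (auto simp: F_def)
  then have "finite {n. F n \<noteq> (\<lambda>x. 0)}"
    by (rule finite_subset) simp
  with f(1) zero periodic(2) have "F \<in> cp_fixed_support \<sigma> \<tau> A"
    by (auto simp: cp_fixed_support_def crossed_product_def F_def)
  moreover have "F \<notin> cp_embed ` A"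
  proof
    assume "F \<in> cp_embed ` A"
    then have "F (- p) = (\<lambda>x. 0)"
      using periodic(1) by (auto simp: cp_embed_def)
    with f(2) show False
      by (simp add: F_def)
  qed
  moreover assume "maximal_abelian \<sigma> \<tau> A (cp_embed ` A)"
  then have "C = cp_embed ` A"
    if "cp_subalgebra \<sigma> \<tau> A C" "cp_commutative \<sigma> \<tau> C" "cp_embed ` A \<subseteq> C" for C
    using that by (simp add: maximal_abelian_def)
  then have "cp_fixed_support \<sigma> \<tau> A = cp_embed ` A"
    using cp_subalgebra_cp_fixed_support[OF sub inv] cp_commutative_cp_fixed_support
      cp_embed_image_subset_cp_fixed_support[OF zero]
    by blast
  ultimately show False
    by blast
qed

lemma closed_fixpoints:
  fixes g :: "'a::topological_space \<Rightarrow> 'a"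
  assumes "continuous_on UNIV g"
    and sep: "\<And>x y. x \<noteq> y \<Longrightarrow> \<exists>f :: 'a \<Rightarrow> 'b::t2_space. continuous_on UNIV f \<and> f x \<noteq> f y"
  shows "closed {x. g x = x}"
proof -
  have "\<exists>T. open T \<and> t \<in> T \<and> T \<subseteq> - {x. g x = x}" if "g t \<noteq> t" for t
  proof -
    obtain f :: "'a \<Rightarrow> 'b" where f: "continuous_on UNIV f" "f (g t) \<noteq> f t"
      using sep[OF \<open>g t \<noteq> t\<close>] by blast
    have "open {x. f (g x) \<noteq> f x}"
      using continuous_on_compose2[OF f(1) assms(1)] f(1) by (intro open_Collect_neq) auto
    with f(2) show ?thesis by force
  qed
  then show ?thesis
    by (subst closed_def, subst open_subopen) auto
qed

lemma baire_space_closed_cover: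
  fixes F :: "nat \<Rightarrow> 'a::topological_space set"
  assumes baire: "baire_space TYPE('a)" and closed: "\<And>k. closed (F k)"
    and "open U" "U \<noteq> {}" "U \<subseteq> (\<Union>k. F k)"
  shows "\<exists>k. interior (F k) \<noteq> {}"
proof (rule ccontr)
  assume "\<not> ?thesis"
  then have "interior (F k) = {}" for k
    by blast
  then have "open (- F k) \<and> closure (- F k) = UNIV" for k
    using closed[of k] by (simp add: open_Compl closure_interior)
  then have "closure (\<Inter>k. - F k) = UNIV"
    using baire[unfolded baire_space_def, rule_format, of "\<lambda>k. - F k"] by blast
  moreover have "U \<inter> (\<Inter>k. - F k) = {}"
    using \<open>U \<subseteq> (\<Union>k. F k)\<close> by blast
  ultimately show False
    using open_Int_closure_eq_empty[OF \<open>open U\<close>] \<open>U \<noteq> {}\<close> by auto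
qed

lemma periodic_if_not_Per_inf:
  assumes "\<And>x. \<sigma> (\<tau> x) = x" "\<And>x. \<tau> (\<sigma> x) = x" and "x \<notin> Per_inf \<sigma> \<tau>"
  shows "\<exists>k. ipow \<sigma> \<tau> (int (Suc k)) x = x"
proof -
  obtain n where n: "n \<noteq> 0" "ipow \<sigma> \<tau> n x = x"
    using assms(3) by (auto simp: Per_inf_def)
  then have "ipow \<sigma> \<tau> \<bar>n\<bar> x = x"
    using ipow_uminus_fixed[OF assms(1,2)] by (cases "n \<ge> 0") auto
  moreover have "\<bar>n\<bar> = int (Suc (nat \<bar>n\<bar> - 1))"
    using n(1) by simp
  ultimately show ?thesis by metis
qed

lemma periodic_open_if_not_dense_Per_inf:
  fixes \<sigma> \<tau> :: "'a::topological_space \<Rightarrow> 'a"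
  assumes baire: "baire_space TYPE('a)" and "homeomorphism UNIV UNIV \<sigma> \<tau>"
    and sep: "\<And>x y. x \<noteq> y \<Longrightarrow> \<exists>f :: 'a \<Rightarrow> 'b::t2_space. continuous_on UNIV f \<and> f x \<noteq> f y"
    and "closure (Per_inf \<sigma> \<tau>) \<noteq> UNIV"
  obtains p V where "p \<noteq> 0" "open V" "V \<noteq> {}" "\<And>x. x \<in> V \<Longrightarrow> ipow \<sigma> \<tau> p x = x"
proof -
  have inv: "\<And>x. \<sigma> (\<tau> x) = x" "\<And>x. \<tau> (\<sigma> x) = x"
    and cont: "continuous_on UNIV \<sigma>" "continuous_on UNIV \<tau>"
    using assms(2) by (simp_all add: homeomorphism_def)
  define F where "F k = {x. ipow \<sigma> \<tau> (int (Suc k)) x = x}" for k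
  have closed: "closed (F k)" for k
    unfolding F_def by (rule closed_fixpoints[OF continuous_on_ipow[OF cont] sep])
  have cover: "- closure (Per_inf \<sigma> \<tau>) \<subseteq> (\<Union>k. F k)"
  proof
    fix x assume "x \<in> - closure (Per_inf \<sigma> \<tau>)"
    then have "x \<notin> Per_inf \<sigma> \<tau>"
      using closure_subset by blast
    then obtain k where "ipow \<sigma> \<tau> (int (Suc k)) x = x"
      using periodic_if_not_Per_inf[OF inv] by blast
    then show "x \<in> (\<Union>k. F k)"
      by (auto simp: F_def)
  qed
  have "- closure (Per_inf \<sigma> \<tau>) \<noteq> {}"
    using assms(4) by auto
  then obtain k where "interior (F k) \<noteq> {}"
    using baire_space_closed_cover[OF baire closed open_Compl[OF closed_closure] _ cover] by blast
  show ?thesis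
  proof (rule that)
    show "int (Suc k) \<noteq> 0" "open (interior (F k))" "interior (F k) \<noteq> {}"
      by (simp_all add: \<open>interior (F k) \<noteq> {}\<close>)
    fix x assume "x \<in> interior (F k)"
    then show "ipow \<sigma> \<tau> (int (Suc k)) x = x"
      using interior_subset by (force simp: F_def)
  qed
qed

theorem theorem3p7:
  fixes \<sigma> \<tau> :: "'a::topological_space \<Rightarrow> 'a"
    and A :: "('a \<Rightarrow> complex) set"
  assumes "baire_space TYPE('a)"
    and "homeomorphism UNIV UNIV \<sigma> \<tau>"
    and "is_subalgebra_CX A"
    and "\<forall>f\<in>A. sigtil_pow \<sigma> \<tau> 1 f \<in> A"
    and "\<forall>f\<in>A. sigtil_pow \<sigma> \<tau> (-1) f \<in> A"
    and "\<forall>x y. x \<noteq> y \<longrightarrow> (\<exists>f\<in>A. f x \<noteq> f y)"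
    and "\<forall>U. open U \<and> U \<noteq> {} \<longrightarrow>
           (\<exists>f\<in>A. f \<noteq> (\<lambda>x. 0) \<and> (\<forall>x\<in>UNIV - U. f x = 0))"
  shows "maximal_abelian \<sigma> \<tau> A (cp_embed ` A) \<longleftrightarrow> closure (Per_inf \<sigma> \<tau>) = UNIV"
proof
  assume max: "maximal_abelian \<sigma> \<tau> A (cp_embed ` A)"
  show "closure (Per_inf \<sigma> \<tau>) = UNIV"
  proof (rule ccontr)
    have inv: "\<And>x. \<sigma> (\<tau> x) = x" "\<And>x. \<tau> (\<sigma> x) = x"
      using assms(2) by (simp_all add: homeomorphism_def)
    have "A \<subseteq> CX"
      using assms(3) by (simp add: is_subalgebra_CX_def)
    then have sep: "\<exists>f :: 'a \<Rightarrow> complex. continuous_on UNIV f \<and> f x \<noteq> f y" if "x \<noteq> y" for x y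
      using assms(6) that unfolding CX_def by blast
    assume "closure (Per_inf \<sigma> \<tau>) \<noteq> UNIV"
    then obtain p V
      where "p \<noteq> 0" "open V" "V \<noteq> {}" and periodic: "\<And>x. x \<in> V \<Longrightarrow> ipow \<sigma> \<tau> p x = x"
      using periodic_open_if_not_dense_Per_inf[OF assms(1,2) sep] by blast
    then obtain f where f: "f \<in> A" "f \<noteq> (\<lambda>x. 0)" "\<forall>x\<in>UNIV - V. f x = 0"
      using assms(7) by blast
    then have "ipow \<sigma> \<tau> p x = x" if "f x \<noteq> 0" for x
      using periodic that by blast
    then have "\<not> maximal_abelian \<sigma> \<tau> A (cp_embed ` A)"
      by (rule not_maximal_abelian_if_periodic_on_support[OF assms(3) inv assms(4,5) f(1,2) \<open>p \<noteq> 0\<close>])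
    with max show False
      by contradiction
  qed
next
  assume "closure (Per_inf \<sigma> \<tau>) = UNIV"
  then show "maximal_abelian \<sigma> \<tau> A (cp_embed ` A)"
    by (rule maximal_abelian_if_dense_Per_inf[OF assms(3,6)])
qed

end
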